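(* Let $AP=\{p\}$ and let $L_2$ be the set of Kripke trees $\mathcal{T}$ over $AP$ for which there is an infinite path $\pi$ from the root such that $p$ holds at no node of $\pi$ and, for every $i\ge0$, the node $\pi(2i)$ has a child at which $p$ holds. Then there is no CCTL$^*$ formula $\varphi$ over $AP$ with $\mathcal{L}(\varphi)=L_2$.
   Context: A Kripke tree over $AP$ is a non-blocking tree (nonempty prefix-closed set of words over some set of directions with root $\varepsilon$, every node having a child $w\cdot d$) with a labelling of nodes by subsets of $AP$; an infinite path from the root is a sequence $\pi(0)=\varepsilon,\pi(1),\dots$ with each $\pi(k+1)$ a child of $\pi(k)$. CCTL$^*$: state formulas $\varphi::=\top\mid p\mid\neg\varphi\mid\varphi\wedge\varphi\mid\mathsf{E}\psi\mid\mathsf{D}^k\varphi$ ($k\ge1$), path formulas $\psi::=\varphi\mid\neg\psi\mid\psi\wedge\psi\mid\mathsf{X}\psi\mid\psi\mathsf{U}\psi$, with $(\mathcal{T},w)\models\mathsf{E}\psi$ iff some infinite path starting at $w$ satisfies $\psi$ at position $0$, $(\mathcal{T},w)\models\mathsf{D}^k\varphi$ iff at least $k$ distinct children of $w$ satisfy $\varphi$, $(\mathcal{T},\pi,i)\models\varphi$ iff $(\mathcal{T},\pi(i))\models\varphi$ for state formulas, and standard semantics of $\mathsf{X}$, $\mathsf{U}$ and Boolean connectives. $\mathcal{L}(\varphi)$ is the set of Kripke trees $\mathcal{T}$ with $(\mathcal{T},\varepsilon)\models\varphi$. *)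

theory Defs
  imports Main
begin

text \<open>Kripke trees: nodes are words (lists) over directions (here nat),
  w @ [d] is the child of w in direction d; labels are subsets of AP ('a).\<close>

record 'a ktree =
  nodes :: "nat list set"
  lab :: "nat list \<Rightarrow> 'a set"

definition kripke_tree :: "'a ktree \<Rightarrow> bool" where
  "kripke_tree T \<longleftrightarrow> nodes T \<noteq> {} \<and> [] \<in> nodes T
     \<and> (\<forall>w d. w @ [d] \<in> nodes T \<longrightarrow> w \<in> nodes T)
     \<and> (\<forall>w \<in> nodes T. \<exists>d. w @ [d] \<in> nodes T)"

definition is_path :: "'a ktree \<Rightarrow> nat list \<Rightarrow> (nat \<Rightarrow> nat list) \<Rightarrow> bool" where
  "is_path T w \<pi> \<longleftrightarrow> \<pi> 0 = w \<and> w \<in> nodes T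
     \<and> (\<forall>k. \<exists>d. \<pi> (Suc k) = \<pi> k @ [d] \<and> \<pi> (Suc k) \<in> nodes T)"

datatype 'a sform =
    STrue
  | SProp 'a
  | SNot "'a sform"
  | SAnd "'a sform" "'a sform"
  | SE "'a pform"
  | SD nat "'a sform"
and 'a pform =
    PState "'a sform"
  | PNot "'a pform"
  | PAnd "'a pform" "'a pform"
  | PX "'a pform"
  | PU "'a pform" "'a pform"

fun wf_s :: "'a sform \<Rightarrow> bool" and wf_p :: "'a pform \<Rightarrow> bool" where
  "wf_s STrue = True"
| "wf_s (SProp p) = True"
| "wf_s (SNot f) = wf_s f"
| "wf_s (SAnd f g) = (wf_s f \<and> wf_s g)"
| "wf_s (SE g) = wf_p g"
| "wf_s (SD k f) = (k \<ge> 1 \<and> wf_s f)"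
| "wf_p (PState f) = wf_s f"
| "wf_p (PNot g) = wf_p g"
| "wf_p (PAnd g h) = (wf_p g \<and> wf_p h)"
| "wf_p (PX g) = wf_p g"
| "wf_p (PU g h) = (wf_p g \<and> wf_p h)"

fun sat_s :: "'a ktree \<Rightarrow> nat list \<Rightarrow> 'a sform \<Rightarrow> bool"
and sat_p :: "'a ktree \<Rightarrow> (nat \<Rightarrow> nat list) \<Rightarrow> nat \<Rightarrow> 'a pform \<Rightarrow> bool" where
  "sat_s T w STrue = True"
| "sat_s T w (SProp p) = (p \<in> lab T w)"
| "sat_s T w (SNot f) = (\<not> sat_s T w f)"
| "sat_s T w (SAnd f g) = (sat_s T w f \<and> sat_s T w g)"
| "sat_s T w (SE g) = (\<exists>\<pi>. is_path T w \<pi> \<and> sat_p T \<pi> 0 g)"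
| "sat_s T w (SD k f) = (\<exists>S. finite S \<and> card S = k \<and>
      S \<subseteq> {d. w @ [d] \<in> nodes T \<and> sat_s T (w @ [d]) f})"
| "sat_p T \<pi> i (PState f) = sat_s T (\<pi> i) f"
| "sat_p T \<pi> i (PNot g) = (\<not> sat_p T \<pi> i g)"
| "sat_p T \<pi> i (PAnd g h) = (sat_p T \<pi> i g \<and> sat_p T \<pi> i h)"
| "sat_p T \<pi> i (PX g) = sat_p T \<pi> (Suc i) g"
| "sat_p T \<pi> i (PU g h) = (\<exists>j \<ge> i. sat_p T \<pi> j h \<and> (\<forall>k. i \<le> k \<and> k < j \<longrightarrow> sat_p T \<pi> k g))"

definition lang :: "'a sform \<Rightarrow> 'a ktree set" where
  "lang \<phi> = {T. kripke_tree T \<and> sat_s T [] \<phi>}"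

text \<open>AP = {p}, modelled as the unit type (p = ()).\<close>
definition L2 :: "unit ktree set" where
  "L2 = {T. kripke_tree T \<and> (\<exists>\<pi>. is_path T [] \<pi> \<and> (\<forall>k. () \<notin> lab T (\<pi> k))
        \<and> (\<forall>i. \<exists>d. \<pi> (2*i) @ [d] \<in> nodes T \<and> () \<in> lab T (\<pi> (2*i) @ [d])))}"

end

theory Submission
  imports Defs
begin

text \<open>
  Let the comb \<open>comb n\<close> be the tree with a \<open>p\<close>-free infinite spine carrying a \<open>p\<close>-labelled
  infinite tooth at every depth except \<open>n\<close>. The spine is its only \<open>p\<close>-free path, so
  \<open>comb n \<in> L2\<close> iff \<open>n\<close> is odd. All combs unfold one finitely branching structure whose
  spine states \<open>Before n\<close> record the distance to the missing tooth, and by induction on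
  formulas every formula has the same truth value at all \<open>Before a\<close> with \<open>a\<close> beyond a
  threshold depending on the formula. Counting modalities only look one step ahead, and a
  path formula cannot detect one spine step more or less (stuttering) nor a shift of all
  spine distances by one (congruence) as long as these happen far above the gap.
\<close>

section \<open>Kripke structures and their tree unfoldings\<close>

definition ks_path :: "('s \<Rightarrow> 's set) \<Rightarrow> (nat \<Rightarrow> 's) \<Rightarrow> bool" where
  "ks_path R \<rho> \<longleftrightarrow> (\<forall>k. \<rho> (Suc k) \<in> R (\<rho> k))"

fun ks_sat_s :: "('s \<Rightarrow> 's set) \<Rightarrow> ('s \<Rightarrow> 'a set) \<Rightarrow> 's \<Rightarrow> 'a sform \<Rightarrow> bool"
and ks_sat_p :: "('s \<Rightarrow> 's set) \<Rightarrow> ('s \<Rightarrow> 'a set) \<Rightarrow> (nat \<Rightarrow> 's) \<Rightarrow> nat \<Rightarrow> 'a pform \<Rightarrow> bool"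
where
  "ks_sat_s R L s STrue = True"
| "ks_sat_s R L s (SProp p) = (p \<in> L s)"
| "ks_sat_s R L s (SNot f) = (\<not> ks_sat_s R L s f)"
| "ks_sat_s R L s (SAnd f g) = (ks_sat_s R L s f \<and> ks_sat_s R L s g)"
| "ks_sat_s R L s (SE g) = (\<exists>\<rho>. \<rho> 0 = s \<and> ks_path R \<rho> \<and> ks_sat_p R L \<rho> 0 g)"
| "ks_sat_s R L s (SD k f) = (k \<le> card {t \<in> R s. ks_sat_s R L t f})"
| "ks_sat_p R L \<rho> i (PState f) = ks_sat_s R L (\<rho> i) f"
| "ks_sat_p R L \<rho> i (PNot g) = (\<not> ks_sat_p R L \<rho> i g)"
| "ks_sat_p R L \<rho> i (PAnd g h) = (ks_sat_p R L \<rho> i g \<and> ks_sat_p R L \<rho> i h)"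
| "ks_sat_p R L \<rho> i (PX g) = ks_sat_p R L \<rho> (Suc i) g"
| "ks_sat_p R L \<rho> i (PU g h) =
     (\<exists>j \<ge> i. ks_sat_p R L \<rho> j h \<and> (\<forall>k. i \<le> k \<and> k < j \<longrightarrow> ks_sat_p R L \<rho> k g))"

lemma ks_sat_p_PU_unfold:
  "ks_sat_p R L \<rho> i (PU g h) \<longleftrightarrow>
     ks_sat_p R L \<rho> i h \<or> ks_sat_p R L \<rho> i g \<and> ks_sat_p R L \<rho> (Suc i) (PU g h)"
    (is "?U i \<longleftrightarrow> ?h i \<or> ?g i \<and> ?U (Suc i)")
proof
  assume "?U i"
  then obtain j where j: "i \<le> j" "?h j" "\<forall>k. i \<le> k \<and> k < j \<longrightarrow> ?g k" by auto
  show "?h i \<or> ?g i \<and> ?U (Suc i)"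
  proof (cases "j = i")
    case False
    then have "Suc i \<le> j" using j(1) by simp
    then have "?U (Suc i)" using j(2,3) by auto
    moreover have "?g i" using j(1,3) \<open>Suc i \<le> j\<close> by simp
    ultimately show ?thesis by blast
  qed (use j in simp)
next
  assume "?h i \<or> ?g i \<and> ?U (Suc i)"
  then show "?U i"
  proof
    assume "?g i \<and> ?U (Suc i)"
    then obtain j where j: "Suc i \<le> j" "?h j" "\<forall>k. Suc i \<le> k \<and> k < j \<longrightarrow> ?g k" "?g i" by auto
    have "?g k" if "i \<le> k" "k < j" for k
      using that j(3,4) by (cases "k = i") auto
    then show "?U i" using j(1,2) unfolding ks_sat_p.simps(5) by (meson Suc_leD)
  qed auto
qed

lemma ks_sat_p_suffix:
  "ks_sat_p R L (\<lambda>k. \<rho> (Suc k)) i g = ks_sat_p R L \<rho> (Suc i) g"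
proof (induction g arbitrary: i rule: pform.induct[of "\<lambda>_. True"])
  case (PU g h)
  have shift: "(\<exists>j\<ge>i. P (Suc j) \<and> (\<forall>k. i \<le> k \<and> k < j \<longrightarrow> Q (Suc k)))
     \<longleftrightarrow> (\<exists>j\<ge>Suc i. P j \<and> (\<forall>k. Suc i \<le> k \<and> k < j \<longrightarrow> Q k))" (is "?l \<longleftrightarrow> ?r")
    for P Q :: "nat \<Rightarrow> bool"
  proof
    assume ?l
    then obtain j where j: "j \<ge> i" "P (Suc j)" "\<forall>k. i \<le> k \<and> k < j \<longrightarrow> Q (Suc k)" by blast
    have "Q k" if "Suc i \<le> k" "k < Suc j" for k
      using that j(3) by (cases k) auto
    then show ?r using j by auto
  next
    assume ?r
    then obtain j where j: "j \<ge> Suc i" "P j" "\<forall>k. Suc i \<le> k \<and> k < j \<longrightarrow> Q k" by blast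
    then obtain j' where "j = Suc j'" by (cases j) auto
    then show ?l using j by auto
  qed
  show ?case
    using shift[of "\<lambda>j. ks_sat_p R L \<rho> j h" "\<lambda>k. ks_sat_p R L \<rho> k g"] by (simp add: PU.IH)
qed simp_all

lemma ex_subset_card_iff:
  "finite C \<Longrightarrow> (\<exists>S. finite S \<and> card S = k \<and> S \<subseteq> C) \<longleftrightarrow> k \<le> card C"
  by (metis card_mono obtain_subset_with_card_n)

lemma length_is_path: "is_path T w \<pi> \<Longrightarrow> length (\<pi> k) = length w + k"
proof (induction k)
  case (Suc k)
  then obtain d where "\<pi> (Suc k) = \<pi> k @ [d]" unfolding is_path_def by blast
  then show ?case using Suc by simp
qed (simp add: is_path_def)

locale tree_unfolding =
  fixes T :: "'a ktree" and R :: "'s \<Rightarrow> 's set" and L :: "'s \<Rightarrow> 'a set"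
    and \<alpha> :: "nat list \<Rightarrow> 's"
  assumes finite_R: "finite (R s)"
    and lab_eq: "w \<in> nodes T \<Longrightarrow> lab T w = L (\<alpha> w)"
    and children_bij: "w \<in> nodes T \<Longrightarrow> bij_betw (\<lambda>d. \<alpha> (w @ [d])) {d. w @ [d] \<in> nodes T} (R (\<alpha> w))"
begin

lemma is_path_nodes: "is_path T w \<pi> \<Longrightarrow> \<pi> k \<in> nodes T"
  unfolding is_path_def by (cases k) auto

lemma ks_path_image:
  assumes \<pi>: "is_path T w \<pi>"
  shows "ks_path R (\<alpha> \<circ> \<pi>)"
  unfolding ks_path_def
proof
  fix k
  obtain d where "\<pi> (Suc k) = \<pi> k @ [d]" "\<pi> (Suc k) \<in> nodes T"
    using \<pi> unfolding is_path_def by blast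
  then show "(\<alpha> \<circ> \<pi>) (Suc k) \<in> R ((\<alpha> \<circ> \<pi>) k)"
    using children_bij[OF is_path_nodes[OF \<pi>]] bij_betwE by fastforce
qed

lemma ks_path_lift:
  assumes w: "w \<in> nodes T" and \<rho>: "ks_path R \<rho>" "\<rho> 0 = \<alpha> w"
  obtains \<pi> where "is_path T w \<pi>" "\<alpha> \<circ> \<pi> = \<rho>"
proof -
  have "\<exists>d. v @ [d] \<in> nodes T \<and> \<alpha> (v @ [d]) = \<rho> (Suc k)"
    if "v \<in> nodes T" "\<alpha> v = \<rho> k" for v k
    using children_bij[OF that(1)] \<rho>(1) that(2) unfolding ks_path_def bij_betw_def by force
  then obtain next_dir where next_dir:
      "\<And>v k. v \<in> nodes T \<Longrightarrow> \<alpha> v = \<rho> k \<Longrightarrow>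
         v @ [next_dir v k] \<in> nodes T \<and> \<alpha> (v @ [next_dir v k]) = \<rho> (Suc k)"
    by metis
  define \<pi> where "\<pi> = rec_nat w (\<lambda>k v. v @ [next_dir v k])"
  have inv: "\<pi> k \<in> nodes T \<and> \<alpha> (\<pi> k) = \<rho> k" for k
    by (induction k) (simp_all add: \<pi>_def w \<rho>(2) next_dir)
  have "\<pi> 0 = w" "\<pi> (Suc k) = \<pi> k @ [next_dir (\<pi> k) k]" for k
    by (simp_all add: \<pi>_def)
  then have "is_path T w \<pi>"
    unfolding is_path_def using inv w by metis
  moreover have "\<alpha> \<circ> \<pi> = \<rho>"
    using inv by auto
  ultimately show thesis by (rule that)
qed

lemma finite_children: "w \<in> nodes T \<Longrightarrow> finite {d. w @ [d] \<in> nodes T}"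
  using bij_betw_finite children_bij finite_R by blast

lemma card_children_sat:
  assumes "w \<in> nodes T" "\<And>d. w @ [d] \<in> nodes T \<Longrightarrow> P (w @ [d]) = Q (\<alpha> (w @ [d]))"
  shows "card {d. w @ [d] \<in> nodes T \<and> P (w @ [d])} = card {t \<in> R (\<alpha> w). Q t}"
proof (rule bij_betw_same_card, rule bij_betw_subset[OF children_bij[OF assms(1)]])
  have img: "(\<lambda>d. \<alpha> (w @ [d])) ` {d. w @ [d] \<in> nodes T} = R (\<alpha> w)"
    using children_bij[OF assms(1)] by (simp add: bij_betw_def)
  show "(\<lambda>d. \<alpha> (w @ [d])) ` {d. w @ [d] \<in> nodes T \<and> P (w @ [d])} = {t \<in> R (\<alpha> w). Q t}"
    using assms(2) by (auto simp flip: img)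
qed auto

lemma sat_SE_eq_ks_sat:
  assumes g: "\<And>\<pi> i. \<forall>k. \<pi> k \<in> nodes T \<Longrightarrow> sat_p T \<pi> i g = ks_sat_p R L (\<alpha> \<circ> \<pi>) i g"
    and w: "w \<in> nodes T"
  shows "sat_s T w (SE g) = ks_sat_s R L (\<alpha> w) (SE g)"
proof
  assume "sat_s T w (SE g)"
  then obtain \<pi> where \<pi>: "is_path T w \<pi>" "sat_p T \<pi> 0 g" by auto
  have "(\<alpha> \<circ> \<pi>) 0 = \<alpha> w" using \<pi>(1) by (simp add: is_path_def)
  moreover have "ks_sat_p R L (\<alpha> \<circ> \<pi>) 0 g"
    using g[of \<pi> 0] is_path_nodes[OF \<pi>(1)] \<pi>(2) by (simp add: comp_def)
  moreover note ks_path_image[OF \<pi>(1)]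
  ultimately show "ks_sat_s R L (\<alpha> w) (SE g)"
    by (simp only: ks_sat_s.simps) blast
next
  assume "ks_sat_s R L (\<alpha> w) (SE g)"
  then obtain \<rho> where \<rho>: "\<rho> 0 = \<alpha> w" "ks_path R \<rho>" "ks_sat_p R L \<rho> 0 g" by auto
  obtain \<pi> where \<pi>: "is_path T w \<pi>" "\<alpha> \<circ> \<pi> = \<rho>"
    using ks_path_lift[OF w \<rho>(2,1)] .
  have "sat_p T \<pi> 0 g"
    using g[of \<pi> 0] is_path_nodes[OF \<pi>(1)] \<pi>(2) \<rho>(3) by (simp add: comp_def)
  then show "sat_s T w (SE g)" using \<pi>(1) by auto
qed

lemma sat_SD_eq_ks_sat:
  assumes f: "\<And>v. v \<in> nodes T \<Longrightarrow> sat_s T v f = ks_sat_s R L (\<alpha> v) f"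
    and w: "w \<in> nodes T"
  shows "sat_s T w (SD k f) = ks_sat_s R L (\<alpha> w) (SD k f)"
proof -
  let ?C = "{d. w @ [d] \<in> nodes T \<and> sat_s T (w @ [d]) f}"
  have "finite ?C"
    using finite_children[OF w] by (rule rev_finite_subset) auto
  moreover have "card ?C = card {t \<in> R (\<alpha> w). ks_sat_s R L t f}"
    by (rule card_children_sat[OF w]) (fact f)
  ultimately show ?thesis by (simp add: ex_subset_card_iff)
qed

lemma sat_eq_ks_sat:
  shows "w \<in> nodes T \<Longrightarrow> sat_s T w f = ks_sat_s R L (\<alpha> w) f"
    and "\<forall>k. \<pi> k \<in> nodes T \<Longrightarrow> sat_p T \<pi> i g = ks_sat_p R L (\<alpha> \<circ> \<pi>) i g"
proof (induction f and g arbitrary: w and \<pi> i)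
  case (SProp p)
  show ?case by (simp add: lab_eq[OF SProp.prems])
next
  case (SE g)
  show ?case by (rule sat_SE_eq_ks_sat[OF SE.IH SE.prems])
next
  case (SD k f)
  show ?case by (rule sat_SD_eq_ks_sat[OF SD.IH SD.prems])
next
  case (SNot f)
  show ?case using SNot.IH[OF SNot.prems] by simp
next
  case (SAnd f1 f2)
  show ?case using SAnd.IH[OF SAnd.prems] by simp
next
  case (PState f)
  show ?case using PState.IH[OF PState.prems[rule_format]] by simp
next
  case (PNot g)
  show ?case using PNot.IH[OF PNot.prems] by simp
next
  case (PAnd g1 g2)
  show ?case using PAnd.IH[OF PAnd.prems] by simp
next
  case (PX g)
  show ?case using PX.IH[OF PX.prems] by simp
next
  case (PU g1 g2)
  show ?case using PU.IH[OF PU.prems] by simp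
qed simp

end

section \<open>The combs\<close>

text \<open>
  \<open>Before n\<close> is a spine node \<open>n\<close> levels above the missing tooth, \<open>After\<close> a spine node
  below it, \<open>Tooth\<close> a node inside a tooth.
\<close>

datatype comb_st = Before nat | After | Tooth

fun comb_succ :: "comb_st \<Rightarrow> comb_st set" where
  "comb_succ (Before 0) = {After}"
| "comb_succ (Before (Suc n)) = {Before n, Tooth}"
| "comb_succ After = {After, Tooth}"
| "comb_succ Tooth = {Tooth}"

definition comb_lab :: "comb_st \<Rightarrow> unit set" where
  "comb_lab s = (if s = Tooth then {()} else {})"

abbreviation comb_path :: "(nat \<Rightarrow> comb_st) \<Rightarrow> bool" where
  "comb_path \<equiv> ks_path comb_succ"

abbreviation csat_s :: "comb_st \<Rightarrow> unit sform \<Rightarrow> bool" where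
  "csat_s \<equiv> ks_sat_s comb_succ comb_lab"

abbreviation csat_p :: "(nat \<Rightarrow> comb_st) \<Rightarrow> nat \<Rightarrow> unit pform \<Rightarrow> bool" where
  "csat_p \<equiv> ks_sat_p comb_succ comb_lab"

text \<open>
  Direction 0 continues the spine or a tooth, direction 1 enters a tooth; no 1 at position
  \<open>n\<close> means no tooth at depth \<open>n\<close>.
\<close>

definition comb_nodes :: "nat \<Rightarrow> nat list set" where
  "comb_nodes n = {w. set w \<subseteq> {0, 1} \<and> count_list w 1 \<le> 1 \<and> (n < length w \<longrightarrow> w ! n \<noteq> 1)}"

definition comb :: "nat \<Rightarrow> unit ktree" where
  "comb n = \<lparr>nodes = comb_nodes n, lab = (\<lambda>w. if 1 \<in> set w then {()} else {})\<rparr>"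

definition comb_state :: "nat \<Rightarrow> nat list \<Rightarrow> comb_st" where
  "comb_state n w =
     (if 1 \<in> set w then Tooth else if length w \<le> n then Before (n - length w) else After)"

lemma comb_children:
  assumes "w \<in> comb_nodes n"
  shows "{d. w @ [d] \<in> comb_nodes n} = (if 1 \<in> set w \<or> length w = n then {0} else {0, 1})"
proof -
  have w: "set w \<subseteq> {0, 1}" "count_list w 1 \<le> 1" "n < length w \<longrightarrow> w ! n \<noteq> 1"
    using assms unfolding comb_nodes_def by auto
  have "w @ [d] \<in> comb_nodes n \<longleftrightarrow> d \<in> {0, 1} \<and> (d = 1 \<longrightarrow> 1 \<notin> set w) \<and> (d = 1 \<longrightarrow> length w \<noteq> n)"
    for d
  proof -
    have "count_list (w @ [d]) 1 \<le> 1 \<longleftrightarrow> (d = 1 \<longrightarrow> 1 \<notin> set w)"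
      using w(2) count_list_0_iff[of w 1] by (auto simp: count_list_append)
    moreover have "(n < length (w @ [d]) \<longrightarrow> (w @ [d]) ! n \<noteq> 1) \<longleftrightarrow> (d = 1 \<longrightarrow> length w \<noteq> n)"
      using w(3) by (auto simp: nth_append less_Suc_eq)
    ultimately show ?thesis
      unfolding comb_nodes_def using w(1) by auto
  qed
  then show ?thesis by auto
qed

lemma comb_tree_unfolding: "tree_unfolding (comb n) comb_succ comb_lab (comb_state n)"
proof
  show "finite (comb_succ s)" for s
    by (cases s rule: comb_succ.cases) auto
  show "lab (comb n) w = comb_lab (comb_state n w)" for w
    by (simp add: comb_def comb_state_def comb_lab_def)
  fix w
  assume "w \<in> nodes (comb n)"
  then have w: "w \<in> comb_nodes n" by (simp add: comb_def)
  consider "1 \<in> set w" | "1 \<notin> set w" "length w = n" | "1 \<notin> set w" "length w < n"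
    | "1 \<notin> set w" "n < length w"
    by linarith
  then show "bij_betw (\<lambda>d. comb_state n (w @ [d])) {d. w @ [d] \<in> nodes (comb n)}
      (comb_succ (comb_state n w))"
  proof cases
    case 3
    then have "n - length w = Suc (n - Suc (length w))" by simp
    with 3 show ?thesis
      unfolding comb_def using comb_children[OF w] by (auto simp: comb_state_def bij_betw_def)
  qed (unfold comb_def, use comb_children[OF w] in \<open>auto simp: comb_state_def bij_betw_def\<close>)
qed

lemma comb_kripke_tree: "kripke_tree (comb n)"
proof -
  have "w \<in> comb_nodes n" if "w @ [d] \<in> comb_nodes n" for w d
    using that unfolding comb_nodes_def by (auto simp: nth_append count_list_append)
  moreover have "\<exists>d. w @ [d] \<in> comb_nodes n" if "w \<in> comb_nodes n" for w
    using comb_children[OF that] by (metis insertI1 mem_Collect_eq)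
  moreover have "[] \<in> comb_nodes n"
    by (simp add: comb_nodes_def)
  ultimately show ?thesis
    unfolding kripke_tree_def comb_def by auto
qed

lemma comb_sat: "sat_s (comb n) [] f = csat_s (Before n) f"
proof -
  have "[] \<in> nodes (comb n)"
    by (simp add: comb_def comb_nodes_def)
  then show ?thesis
    using tree_unfolding.sat_eq_ks_sat(1)[OF comb_tree_unfolding] by (simp add: comb_state_def)
qed

lemma comb_spine_path: "is_path (comb n) [] (\<lambda>k. replicate k 0)"
  unfolding is_path_def
proof (intro conjI allI exI)
  have spine: "replicate k 0 \<in> comb_nodes n" for k
    unfolding comb_nodes_def by auto
  then show "[] \<in> nodes (comb n)"
    using spine[of 0] by (simp add: comb_def)
  fix k
  show "replicate (Suc k) 0 = replicate k 0 @ [0]"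
    by (simp add: replicate_append_same)
  show "replicate (Suc k) 0 \<in> nodes (comb n)"
    using spine[of "Suc k"] by (simp add: comb_def)
qed simp

lemma comb_in_L2_iff: "comb n \<in> L2 \<longleftrightarrow> odd n"
proof
  assume "comb n \<in> L2"
  then obtain \<pi> where \<pi>: "is_path (comb n) [] \<pi>" "\<forall>k. () \<notin> lab (comb n) (\<pi> k)"
    "\<forall>i. \<exists>d. \<pi> (2 * i) @ [d] \<in> nodes (comb n) \<and> () \<in> lab (comb n) (\<pi> (2 * i) @ [d])"
    unfolding L2_def by auto
  show "odd n"
  proof
    assume "even n"
    then obtain i where i: "n = 2 * i" by blast
    obtain d where d: "\<pi> n @ [d] \<in> comb_nodes n" "1 \<in> set (\<pi> n @ [d])"
      using \<pi>(3) i unfolding comb_def by (auto split: if_splits)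
    have "1 \<notin> set (\<pi> n)" using \<pi>(2) unfolding comb_def by (auto split: if_splits)
    then have "d = 1" using d(2) by auto
    then show False
      using d(1) length_is_path[OF \<pi>(1), of n] unfolding comb_nodes_def by (auto simp: nth_append)
  qed
next
  assume "odd n"
  have "is_path (comb n) [] (\<lambda>k. replicate k 0)"
    by (rule comb_spine_path)
  moreover have "replicate (2 * i) 0 @ [1] \<in> comb_nodes n" for i
  proof -
    have "n \<noteq> 2 * i" using \<open>odd n\<close> by auto
    then show ?thesis unfolding comb_nodes_def by (auto simp: nth_append count_list_append)
  qed
  ultimately show "comb n \<in> L2"
    unfolding L2_def using comb_kripke_tree by (auto simp: comb_def intro!: exI[of _ "\<lambda>k. replicate k 0"])
qed

section \<open>Deep spine states are indistinguishable\<close>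

lemma comb_path_Tooth_stays:
  assumes "comb_path \<rho>" "\<rho> t = Tooth" "t \<le> k"
  shows "\<rho> k = Tooth"
  using assms(3)
proof (induction k rule: dec_induct)
  case (step k)
  have "\<rho> (Suc k) \<in> comb_succ (\<rho> k)" using assms(1) by (simp add: ks_path_def)
  then show ?case using step.IH by simp
qed (rule assms(2))

lemma comb_path_from_Before:
  assumes "comb_path \<rho>" "\<rho> 0 = Before i" "k \<le> i"
  shows "\<rho> k = Before (i - k) \<or> \<rho> k = Tooth"
  using assms(3)
proof (induction k)
  case (Suc k)
  have "i - k = Suc (i - Suc k)" using Suc.prems by simp
  then have "\<rho> k = Before (Suc (i - Suc k)) \<or> \<rho> k = Tooth" using Suc by simp
  moreover have "\<rho> (Suc k) \<in> comb_succ (\<rho> k)" using assms(1) by (simp add: ks_path_def)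
  ultimately show ?case by auto
qed (simp add: assms(2))

lemma comb_path_cases:
  assumes "comb_path \<rho>" "\<rho> 0 = Before i" "h \<le> i"
  shows "(\<forall>k<h. \<rho> k = Before (i - k)) \<or> (\<forall>k. \<rho> k = Tooth \<or> (\<exists>j. \<rho> k = Before j \<and> i < j + h))"
proof (cases "\<forall>k<h. \<rho> k = Before (i - k)")
  case False
  then obtain k0 where k0: "k0 < h" "\<rho> k0 \<noteq> Before (i - k0)" by auto
  then have "\<rho> k0 = Tooth" using comb_path_from_Before[OF assms(1,2), of k0] assms(3) by auto
  have "\<rho> k = Tooth \<or> (\<exists>j. \<rho> k = Before j \<and> i < j + h)" for k
  proof (cases "k0 \<le> k")
    case True
    then show ?thesis using comb_path_Tooth_stays[OF assms(1) \<open>\<rho> k0 = Tooth\<close>] by blast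
  next
    case False
    then show ?thesis using comb_path_from_Before[OF assms(1,2), of k] k0(1) assms(3) by auto
  qed
  then show ?thesis by blast
qed simp

definition before_map :: "(nat \<Rightarrow> nat) \<Rightarrow> comb_st \<Rightarrow> comb_st" where
  "before_map f s = (case s of Before j \<Rightarrow> Before (f j) | _ \<Rightarrow> s)"

lemma comb_path_before_map:
  assumes "comb_path \<rho>" and "\<And>k j. \<rho> k = Before j \<Longrightarrow> 0 < j \<and> f j = Suc (f (j - 1))"
  shows "comb_path (before_map f \<circ> \<rho>)"
  unfolding ks_path_def
proof
  fix k
  have step: "\<rho> (Suc k) \<in> comb_succ (\<rho> k)" using assms(1) by (simp add: ks_path_def)
  show "(before_map f \<circ> \<rho>) (Suc k) \<in> comb_succ ((before_map f \<circ> \<rho>) k)"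
  proof (cases "\<rho> k")
    case (Before j)
    have j: "0 < j" "f j = Suc (f (j - 1))" using assms(2)[OF Before] by auto
    obtain j' where j': "j = Suc j'" using j(1) by (cases j) auto
    have "\<rho> (Suc k) \<in> {Before j', Tooth}"
      using step Before j' by simp
    then show ?thesis using Before j(2) j' by (auto simp: before_map_def)
  qed (use step in \<open>auto simp: before_map_def\<close>)
qed

definition far :: "nat \<Rightarrow> comb_st \<Rightarrow> bool" where
  "far T s \<longleftrightarrow> (\<exists>a \<ge> T. s = Before a)"

definition far_eq :: "nat \<Rightarrow> comb_st \<Rightarrow> comb_st \<Rightarrow> bool" where
  "far_eq T s t \<longleftrightarrow> s = t \<or> far T s \<and> far T t"

lemma far_mono: "far T s \<Longrightarrow> T' \<le> T \<Longrightarrow> far T' s"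
  unfolding far_def by auto

lemma far_eq_mono: "far_eq T s t \<Longrightarrow> T' \<le> T \<Longrightarrow> far_eq T' s t"
  unfolding far_eq_def far_def by auto

lemma far_eq_if_Suc_invariant:
  assumes "\<And>i. N \<le> i \<Longrightarrow> P (Before (Suc i)) = P (Before i)" "far_eq N s t"
  shows "P s = P t"
proof -
  have to_N: "P (Before a) = P (Before N)" if "N \<le> a" for a
    using that by (induction a rule: dec_induct) (simp_all add: assms(1))
  from assms(2) consider "s = t" | a b where "s = Before a" "t = Before b" "N \<le> a" "N \<le> b"
    unfolding far_eq_def far_def by blast
  then show ?thesis
  proof cases
    case 2
    then show ?thesis using to_N[OF 2(3)] to_N[OF 2(4)] by simp
  qed simp
qed

definition far_invariant :: "nat \<Rightarrow> unit sform \<Rightarrow> bool" where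
  "far_invariant T f \<longleftrightarrow> (\<forall>s t. far_eq T s t \<longrightarrow> csat_s s f = csat_s t f)"

definition far_congruent :: "nat \<Rightarrow> unit pform \<Rightarrow> bool" where
  "far_congruent T g \<longleftrightarrow>
     (\<forall>\<rho> \<rho>' i. (\<forall>k. far_eq T (\<rho> k) (\<rho>' k)) \<longrightarrow> csat_p \<rho> i g = csat_p \<rho>' i g)"

definition stutter_invariant :: "nat \<Rightarrow> nat \<Rightarrow> unit pform \<Rightarrow> bool" where
  "stutter_invariant T h g \<longleftrightarrow>
     (\<forall>\<rho> i. (\<forall>k \<le> h. far T (\<rho> (i + k))) \<longrightarrow> csat_p \<rho> (Suc i) g = csat_p \<rho> i g)"

lemma far_invariant_mono: "far_invariant T f \<Longrightarrow> T \<le> T' \<Longrightarrow> far_invariant T' f"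
  unfolding far_invariant_def using far_eq_mono by blast

lemma far_congruent_mono: "far_congruent T g \<Longrightarrow> T \<le> T' \<Longrightarrow> far_congruent T' g"
  unfolding far_congruent_def using far_eq_mono by blast

lemma stutter_invariant_mono:
  "stutter_invariant T h g \<Longrightarrow> T \<le> T' \<Longrightarrow> h \<le> h' \<Longrightarrow> stutter_invariant T' h' g"
  unfolding stutter_invariant_def using far_mono by (meson order_trans)

lemma card_comb_succ_Before:
  "card {u \<in> comb_succ (Before (Suc a)). P u} = of_bool (P (Before a)) + of_bool (P Tooth)"
proof -
  have "{u \<in> comb_succ (Before (Suc a)). P u}
      = (if P (Before a) then {Before a} else {}) \<union> (if P Tooth then {Tooth} else {})"
    by auto
  then show ?thesis by simp
qed

text \<open>
  A path from a deep \<open>Before\<close> state either follows the spine for more than \<open>h\<close> steps, and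
  then dropping or duplicating its first state is invisible by stuttering, or it enters a
  tooth earlier, and then all its \<open>Before\<close> states are deep and shifting their distances by
  one is invisible by congruence.
\<close>

context
  fixes g :: "unit pform" and T h :: nat
  assumes congruent: "far_congruent T g"
    and stutter: "stutter_invariant T h g"
begin

lemma before_map_deep_path:
  assumes \<rho>: "comb_path \<rho>" and deep: "\<And>k j. \<rho> k = Before j \<Longrightarrow> T + 2 \<le> j"
    and f: "\<And>j. T + 2 \<le> j \<Longrightarrow> T \<le> f j \<and> f j = Suc (f (j - 1))"
  shows "comb_path (before_map f \<circ> \<rho>)" "csat_p (before_map f \<circ> \<rho>) 0 g = csat_p \<rho> 0 g"
proof -
  show "comb_path (before_map f \<circ> \<rho>)"
    using \<rho> by (rule comb_path_before_map) (use deep f in force)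
  have "far_eq T (\<rho> k) ((before_map f \<circ> \<rho>) k)" for k
  proof (cases "\<rho> k")
    case (Before j)
    then show ?thesis
      using deep[OF Before] f[OF deep[OF Before]] by (auto simp: before_map_def far_eq_def far_def)
  qed (simp_all add: before_map_def far_eq_def)
  then show "csat_p (before_map f \<circ> \<rho>) 0 g = csat_p \<rho> 0 g"
    using congruent unfolding far_congruent_def by blast
qed

lemma csat_SE_Before_Suc_imp:
  assumes i: "T + h + 2 \<le> i" and sat: "csat_s (Before (Suc i)) (SE g)"
  shows "csat_s (Before i) (SE g)"
proof -
  obtain \<rho> where \<rho>: "\<rho> 0 = Before (Suc i)" "comb_path \<rho>" "csat_p \<rho> 0 g"
    using sat by auto
  from comb_path_cases[OF \<rho>(2,1), of "Suc (Suc h)"] i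
  consider (spine) "\<forall>k<Suc (Suc h). \<rho> k = Before (Suc i - k)"
    | (tooth) "\<forall>k. \<rho> k = Tooth \<or> (\<exists>j. \<rho> k = Before j \<and> Suc i < j + Suc (Suc h))"
    by fastforce
  then show ?thesis
  proof cases
    case spine
    have "\<forall>k \<le> h. far T (\<rho> (0 + k))"
      using spine i by (auto simp: far_def)
    then have "csat_p \<rho> (Suc 0) g = csat_p \<rho> 0 g"
      using stutter unfolding stutter_invariant_def by blast
    then have "csat_p (\<lambda>k. \<rho> (Suc k)) 0 g"
      using \<rho>(3) by (simp add: ks_sat_p_suffix)
    moreover have "comb_path (\<lambda>k. \<rho> (Suc k))"
      using \<rho>(2) by (simp add: ks_path_def)
    moreover have "\<rho> (Suc 0) = Before i"
      using spine by simp
    ultimately show ?thesis by auto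
  next
    case tooth
    let ?\<rho>' = "before_map (\<lambda>j. j - 1) \<circ> \<rho>"
    have deep: "T + 2 \<le> j" if "\<rho> k = Before j" for k j
      using tooth[rule_format, of k] that i by auto
    have "comb_path ?\<rho>'"
      by (rule before_map_deep_path(1)[OF \<rho>(2) deep]) auto
    moreover have "csat_p ?\<rho>' 0 g = csat_p \<rho> 0 g"
      by (rule before_map_deep_path(2)[OF \<rho>(2) deep]) auto
    moreover have "?\<rho>' 0 = Before i"
      by (simp add: \<rho>(1) before_map_def)
    ultimately show ?thesis using \<rho>(3) by (simp only: ks_sat_s.simps) blast
  qed
qed

lemma csat_SE_Before_imp_Suc:
  assumes i: "T + h + 2 \<le> i" and sat: "csat_s (Before i) (SE g)"
  shows "csat_s (Before (Suc i)) (SE g)"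
proof -
  obtain \<rho> where \<rho>: "\<rho> 0 = Before i" "comb_path \<rho>" "csat_p \<rho> 0 g"
    using sat by auto
  from comb_path_cases[OF \<rho>(2,1), of "Suc h"] i
  consider (spine) "\<forall>k<Suc h. \<rho> k = Before (i - k)"
    | (tooth) "\<forall>k. \<rho> k = Tooth \<or> (\<exists>j. \<rho> k = Before j \<and> i < j + Suc h)"
    by fastforce
  then show ?thesis
  proof cases
    case spine
    define \<rho>' where "\<rho>' = case_nat (Before (Suc i)) \<rho>"
    have "\<forall>k \<le> h. far T (\<rho>' (0 + k))"
      using spine i by (auto simp: \<rho>'_def far_def split: nat.split)
    then have "csat_p \<rho>' (Suc 0) g = csat_p \<rho>' 0 g"
      using stutter unfolding stutter_invariant_def by blast
    moreover have "csat_p \<rho>' (Suc 0) g = csat_p \<rho> 0 g"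
      using ks_sat_p_suffix[of comb_succ comb_lab \<rho>' 0 g] by (simp add: \<rho>'_def)
    moreover have "comb_path \<rho>'"
      using \<rho>(1,2) by (auto simp: \<rho>'_def ks_path_def split: nat.split)
    moreover have "\<rho>' 0 = Before (Suc i)"
      by (simp add: \<rho>'_def)
    ultimately show ?thesis using \<rho>(3) by (simp only: ks_sat_s.simps) metis
  next
    case tooth
    let ?\<rho>' = "before_map (Suc) \<circ> \<rho>"
    have deep: "T + 2 \<le> j" if "\<rho> k = Before j" for k j
      using tooth[rule_format, of k] that i by auto
    have "comb_path ?\<rho>'"
      by (rule before_map_deep_path(1)[OF \<rho>(2) deep]) auto
    moreover have "csat_p ?\<rho>' 0 g = csat_p \<rho> 0 g"
      by (rule before_map_deep_path(2)[OF \<rho>(2) deep]) auto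
    moreover have "?\<rho>' 0 = Before (Suc i)"
      by (simp add: \<rho>(1) before_map_def)
    ultimately show ?thesis using \<rho>(3) by (simp only: ks_sat_s.simps) blast
  qed
qed

lemma far_invariant_SE: "far_invariant (T + h + 2) (SE g)"
  unfolding far_invariant_def
proof (intro allI impI)
  fix s t
  assume "far_eq (T + h + 2) s t"
  then show "csat_s s (SE g) = csat_s t (SE g)"
    by (rule far_eq_if_Suc_invariant[where P = "\<lambda>s. csat_s s (SE g)", rotated])
      (use csat_SE_Before_Suc_imp csat_SE_Before_imp_Suc in blast)
qed

end

lemma far_invariant_SD:
  assumes "far_invariant T f"
  shows "far_invariant (Suc T) (SD k f)"
  unfolding far_invariant_def
proof (intro allI impI)
  fix s t
  assume "far_eq (Suc T) s t"
  then consider "s = t" | a b where "s = Before (Suc a)" "t = Before (Suc b)" "T \<le> a" "T \<le> b"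
    unfolding far_eq_def far_def by (metis Suc_le_D Suc_le_mono)
  then show "csat_s s (SD k f) = csat_s t (SD k f)"
  proof cases
    case 2
    then have "csat_s (Before a) f = csat_s (Before b) f"
      using assms unfolding far_invariant_def far_eq_def far_def by blast
    then show ?thesis unfolding 2 ks_sat_s.simps(6) card_comb_succ_Before by simp
  qed simp
qed

lemma far_congruent_stutter_invariant_mono:
  "far_congruent T g \<and> stutter_invariant T h g \<Longrightarrow> T \<le> T' \<Longrightarrow> h \<le> h'
    \<Longrightarrow> far_congruent T' g \<and> stutter_invariant T' h' g"
  using far_congruent_mono stutter_invariant_mono by blast

lemma far_congruent_PState:
  assumes "far_invariant T f"
  shows "far_congruent T (PState f)"
  using assms unfolding far_congruent_def far_invariant_def by (simp only: ks_sat_p.simps) blast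

lemma stutter_invariant_PState:
  assumes "far_invariant T f"
  shows "stutter_invariant T (Suc h) (PState f)"
  unfolding stutter_invariant_def
proof (intro allI impI)
  fix \<rho> :: "nat \<Rightarrow> comb_st" and i :: nat
  assume far_ahead: "\<forall>k \<le> Suc h. far T (\<rho> (i + k))"
  have "far T (\<rho> (Suc i))" "far T (\<rho> i)"
    using far_ahead[rule_format, of 1] far_ahead[rule_format, of 0] by simp_all
  then have "far_eq T (\<rho> (Suc i)) (\<rho> i)"
    by (simp add: far_eq_def)
  then show "csat_p \<rho> (Suc i) (PState f) = csat_p \<rho> i (PState f)"
    using assms unfolding far_invariant_def by simp
qed

lemma stutter_invariant_PX:
  assumes "stutter_invariant T h g"
  shows "stutter_invariant T (Suc h) (PX g)"
  unfolding stutter_invariant_def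
proof (intro allI impI)
  fix \<rho> :: "nat \<Rightarrow> comb_st" and i :: nat
  assume far_ahead: "\<forall>k \<le> Suc h. far T (\<rho> (i + k))"
  have "far T (\<rho> (Suc i + k))" if "k \<le> h" for k
    using far_ahead[rule_format, of "Suc k"] that by simp
  then show "csat_p \<rho> (Suc i) (PX g) = csat_p \<rho> i (PX g)"
    using assms unfolding stutter_invariant_def by simp
qed

lemma far_congruent_PU:
  assumes "far_congruent T g1" "far_congruent T g2"
  shows "far_congruent T (PU g1 g2)"
  unfolding far_congruent_def
proof (intro allI impI)
  fix \<rho> \<rho>' :: "nat \<Rightarrow> comb_st" and i :: nat
  assume "\<forall>k. far_eq T (\<rho> k) (\<rho>' k)"
  then have "csat_p \<rho> j g1 = csat_p \<rho>' j g1" "csat_p \<rho> j g2 = csat_p \<rho>' j g2" for j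
    using assms unfolding far_congruent_def by blast+
  then show "csat_p \<rho> i (PU g1 g2) = csat_p \<rho>' i (PU g1 g2)" by simp
qed

lemma stutter_invariant_PU:
  assumes "stutter_invariant T h g1" "stutter_invariant T h g2"
  shows "stutter_invariant T h (PU g1 g2)"
  unfolding stutter_invariant_def
proof (intro allI impI)
  fix \<rho> i
  assume "\<forall>k\<le>h. far T (\<rho> (i + k))"
  then have "csat_p \<rho> (Suc i) g1 = csat_p \<rho> i g1" "csat_p \<rho> (Suc i) g2 = csat_p \<rho> i g2"
    using assms unfolding stutter_invariant_def by blast+
  then show "csat_p \<rho> (Suc i) (PU g1 g2) = csat_p \<rho> i (PU g1 g2)"
    using ks_sat_p_PU_unfold[of comb_succ comb_lab \<rho> i g1 g2]
      ks_sat_p_PU_unfold[of comb_succ comb_lab \<rho> "Suc i" g1 g2] by blast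
qed

text \<open>\<open>size g\<close> bounds the nesting depth of \<open>PX\<close> in \<open>g\<close>.\<close>

fun threshold_s :: "'a sform \<Rightarrow> nat" and threshold_p :: "'a pform \<Rightarrow> nat" where
  "threshold_s STrue = 0"
| "threshold_s (SProp p) = 0"
| "threshold_s (SNot f) = threshold_s f"
| "threshold_s (SAnd f g) = max (threshold_s f) (threshold_s g)"
| "threshold_s (SE g) = threshold_p g + size g + 2"
| "threshold_s (SD k f) = Suc (threshold_s f)"
| "threshold_p (PState f) = threshold_s f"
| "threshold_p (PNot g) = threshold_p g"
| "threshold_p (PAnd g h) = max (threshold_p g) (threshold_p h)"
| "threshold_p (PX g) = threshold_p g"
| "threshold_p (PU g h) = max (threshold_p g) (threshold_p h)"

lemma comb_sat_stable:
  shows "far_invariant (threshold_s f) f"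
    and "far_congruent (threshold_p g) g \<and> stutter_invariant (threshold_p g) (size g) g"
proof (induction f and g)
  case STrue
  show ?case by (simp add: far_invariant_def)
next
  case (SProp p)
  show ?case by (auto simp: far_invariant_def far_eq_def far_def comb_lab_def)
next
  case (SNot f)
  then show ?case by (simp add: far_invariant_def)
next
  case (SAnd f1 f2)
  then have "far_invariant (threshold_s (SAnd f1 f2)) f1" "far_invariant (threshold_s (SAnd f1 f2)) f2"
    by (simp_all add: far_invariant_mono)
  then show ?case by (simp add: far_invariant_def)
next
  case (SE g)
  then show ?case using far_invariant_SE by simp
next
  case (SD k f)
  then show ?case using far_invariant_SD by simp
next
  case (PState f)
  then show ?case using far_congruent_PState stutter_invariant_PState by simp
next
  case (PNot g)
  then show ?case by (simp add: far_congruent_def stutter_invariant_def)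
next
  case (PAnd g1 g2)
  let ?T = "threshold_p (PAnd g1 g2)" and ?h = "size (PAnd g1 g2)"
  have "far_congruent ?T g1 \<and> stutter_invariant ?T ?h g1"
    using PAnd.IH(1) by (rule far_congruent_stutter_invariant_mono) simp_all
  moreover have "far_congruent ?T g2 \<and> stutter_invariant ?T ?h g2"
    using PAnd.IH(2) by (rule far_congruent_stutter_invariant_mono) simp_all
  ultimately show ?case
    unfolding far_congruent_def stutter_invariant_def by (simp only: ks_sat_p.simps) blast
next
  case (PX g)
  then have "far_congruent (threshold_p (PX g)) (PX g)"
    unfolding far_congruent_def by (simp only: ks_sat_p.simps threshold_p.simps) blast
  then show ?case using stutter_invariant_PX PX by simp
next
  case (PU g1 g2)
  let ?T = "threshold_p (PU g1 g2)" and ?h = "size (PU g1 g2)"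
  have "far_congruent ?T g1 \<and> stutter_invariant ?T ?h g1"
    using PU.IH(1) by (rule far_congruent_stutter_invariant_mono) simp_all
  moreover have "far_congruent ?T g2 \<and> stutter_invariant ?T ?h g2"
    using PU.IH(2) by (rule far_congruent_stutter_invariant_mono) simp_all
  ultimately show ?case
    using far_congruent_PU stutter_invariant_PU by simp
qed

theorem corollary24:
  shows "\<not> (\<exists>\<phi> :: unit sform. wf_s \<phi> \<and> lang \<phi> = L2)"
proof
  assume "\<exists>\<phi> :: unit sform. wf_s \<phi> \<and> lang \<phi> = L2"
  then obtain \<phi> :: "unit sform" where "lang \<phi> = L2" by blast
  then have odd_iff: "odd n \<longleftrightarrow> csat_s (Before n) \<phi>" for n
    using comb_in_L2_iff[of n] comb_kripke_tree[of n] comb_sat[of n \<phi>] unfolding lang_def by auto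
  let ?N = "threshold_s \<phi>"
  have "far_eq ?N (Before (2 * ?N + 1)) (Before (2 * ?N + 2))"
    by (auto simp: far_eq_def far_def)
  then have "csat_s (Before (2 * ?N + 1)) \<phi> = csat_s (Before (2 * ?N + 2)) \<phi>"
    using comb_sat_stable(1)[of \<phi>] unfolding far_invariant_def by blast
  then show False
    using odd_iff[of "2 * ?N + 1"] odd_iff[of "2 * ?N + 2"] by simp
qed

end
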